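(* Let $n\geq3$ and let $\lambda=\langle\lambda_1,\dots,\lambda_k\rangle$ be a composition of $n-1$ with $\lambda_1\geq2$ and $\lambda_k\geq2$. If $\lambda_j>\lambda_1+1$ for some $j\in\{2,\dots,k\}$, then the matrix $H_\lambda$ is not a minimal matrix representation, i.e. the $n\times(n+1)$ matrix $[0\,|\,H_\lambda]$ obtained by prepending a zero column is not a minimal matrix representation.
   Context: Definition of $H_\lambda$: partition the rows $1,\dots,n$ into consecutive blocks $R_0=\{1\},R_1,\dots,R_k$ with $|R_j|=\lambda_j$, and the columns $1,\dots,n$ into consecutive blocks $C_1,\dots,C_k,C_{k+1}=\{n\}$ with $|C_j|=\lambda_j$ for $j\le k$. $H_\lambda$ is the $n\times n$ $0/1$-matrix whose block $(R_j,C_j)$ is $I_{\lambda_j}$ for $1\le j\le k$, whose blocks $(R_i,C_j)$ with $i>j$ are zero, and whose blocks $(R_i,C_j)$ with $0\le i<j\le k+1$ are all ones if $j-i$ is odd and all zeros if $j-i$ is even. Minimal matrix representation: for $x\in\{0,1\}^n$ its column number is $(2^0,2^1,\dots,2^{n-1})x$; for an $n\times m$ $0/1$-matrix $P$ with distinct columns, $\nu(P)$ is the increasingly sorted vector of its column numbers. $P$ is a minimal matrix representation if its column numbers are strictly increasing from left to right and $\nu(P)\preceq\nu(Q)$ lexicographically for every $Q$ obtained from $P$ by complementing (exchanging $0\leftrightarrow1$) the entries of some subset of rows and then permuting rows. *)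

theory Defs
  imports Main
begin

text \<open>Conventions: matrices are functions nat => nat => nat with 0/1 entries,
  rows and columns indexed from 0. Row i (0-indexed) gets weight 2^i, so the
  paper's row 1 has weight 2^0. A composition is a list lam of positive
  naturals; lam ! (j-1) is the paper's lambda_j.\<close>

definition pstart :: "nat list \<Rightarrow> nat \<Rightarrow> nat" where
  "pstart lam j = sum_list (take j lam)"

text \<open>Block (1-based, as in the paper) containing position x of 0..sum lam - 1.\<close>
definition blk :: "nat list \<Rightarrow> nat \<Rightarrow> nat" where
  "blk lam x = Suc (LEAST j. x < pstart lam (Suc j))"

text \<open>Row block: row 0 is R_0 = {1}; row r >= 1 lies in R_a with a = blk lam (r-1).\<close>
definition rowblk :: "nat list \<Rightarrow> nat \<Rightarrow> nat" where
  "rowblk lam r = (if r = 0 then 0 else blk lam (r - 1))"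

definition rowoff :: "nat list \<Rightarrow> nat \<Rightarrow> nat" where
  "rowoff lam r = (r - 1) - pstart lam (rowblk lam r - 1)"

text \<open>Column block: column c < n-1 lies in C_b with b = blk lam c; the last column is C_{k+1}.\<close>
definition colblk :: "nat list \<Rightarrow> nat \<Rightarrow> nat" where
  "colblk lam c = (if c < sum_list lam then blk lam c else Suc (length lam))"

definition coloff :: "nat list \<Rightarrow> nat \<Rightarrow> nat" where
  "coloff lam c = c - pstart lam (colblk lam c - 1)"

definition Hmat :: "nat list \<Rightarrow> nat \<Rightarrow> nat \<Rightarrow> nat" where
  "Hmat lam r c =
     (let a = rowblk lam r; b = colblk lam c in
      if a = b then (if rowoff lam r = coloff lam c then 1 else 0)
      else if b < a then 0
      else if odd (b - a) then 1 else 0)"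

definition zeroH :: "nat list \<Rightarrow> nat \<Rightarrow> nat \<Rightarrow> nat" where
  "zeroH lam r c = (if c = 0 then 0 else Hmat lam r (c - 1))"

definition colnum :: "nat \<Rightarrow> (nat \<Rightarrow> nat \<Rightarrow> nat) \<Rightarrow> nat \<Rightarrow> nat" where
  "colnum n P j = (\<Sum>i<n. P i j * 2 ^ i)"

definition nu :: "nat \<Rightarrow> nat \<Rightarrow> (nat \<Rightarrow> nat \<Rightarrow> nat) \<Rightarrow> nat list" where
  "nu n m P = sort (map (colnum n P) [0..<m])"

definition lex_le :: "nat list \<Rightarrow> nat list \<Rightarrow> bool" where
  "lex_le xs ys \<longleftrightarrow> xs = ys \<or> (xs, ys) \<in> lexord {(a, b). a < b}"

text \<open>Complement the rows in S, then permute rows by sigma (row i of the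
  result is row sigma i of the complemented matrix).\<close>
definition comp_perm :: "(nat \<Rightarrow> nat) \<Rightarrow> nat set \<Rightarrow> (nat \<Rightarrow> nat \<Rightarrow> nat) \<Rightarrow> nat \<Rightarrow> nat \<Rightarrow> nat" where
  "comp_perm \<sigma> S P i j = (if \<sigma> i \<in> S then 1 - P (\<sigma> i) j else P (\<sigma> i) j)"

definition is_01 :: "nat \<Rightarrow> nat \<Rightarrow> (nat \<Rightarrow> nat \<Rightarrow> nat) \<Rightarrow> bool" where
  "is_01 n m P \<longleftrightarrow> (\<forall>i<n. \<forall>j<m. P i j \<in> {0, 1})"

definition minimal_rep :: "nat \<Rightarrow> nat \<Rightarrow> (nat \<Rightarrow> nat \<Rightarrow> nat) \<Rightarrow> bool" where
  "minimal_rep n m P \<longleftrightarrow>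
     is_01 n m P \<and>
     sorted_wrt (<) (map (colnum n P) [0..<m]) \<and>
     (\<forall>\<sigma> S. bij_betw \<sigma> {..<n} {..<n} \<longrightarrow> S \<subseteq> {..<n} \<longrightarrow>
        lex_le (nu n m P) (nu n m (comp_perm \<sigma> S P)))"

end

theory Submission
  imports Defs "HOL-Number_Theory.Cong"
begin

text \<open>The first \<open>\<lambda>\<^sub>1 + 1\<close> columns of \<open>[0 | H\<^sub>\<lambda>]\<close> have the numbers
  \<open>0 < 2\<^sup>0 + 2\<^sup>1 < \<dots> < 2\<^sup>0 + 2\<^sup>\<lambda>\<^sub>1\<close>, and the next column has ones in the
  first rows of \<open>R\<^sub>1\<close> and of \<open>R\<^sub>2\<close>, so its number exceeds \<open>2\<^sup>0 + 2\<^sup>\<lambda>\<^sub>1\<^sup>+\<^sup>1\<close>.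
  Take a block \<open>C\<^sub>j\<close> with \<open>\<lambda>\<^sub>j \<ge> \<lambda>\<^sub>1 + 2\<close> and complement the rows in which
  the first column of \<open>C\<^sub>j\<close> has a one: this adds that column to every column mod 2.
  Within \<open>C\<^sub>j\<close> the columns differ from the first one only on the identity block
  \<open>(R\<^sub>j, C\<^sub>j)\<close>, so the column of \<open>C\<^sub>j\<close> at offset \<open>t \<ge> 1\<close> turns into the column
  with ones exactly in the rows of \<open>R\<^sub>j\<close> at offsets \<open>0\<close> and \<open>t\<close>. After rotating the
  rows cyclically so that \<open>R\<^sub>j\<close> starts at the top, \<open>C\<^sub>j\<close> supplies the numbers
  \<open>0, 2\<^sup>0 + 2\<^sup>1, \<dots>, 2\<^sup>0 + 2\<^sup>\<lambda>\<^sub>1\<^sup>+\<^sup>1\<close>, so the new vector \<open>\<nu>\<close> is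
  lexicographically smaller than the old one.\<close>

lemma pstart_0 [simp]: "pstart lam 0 = 0"
  by (simp add: pstart_def)

lemma pstart_Suc: "j < length lam \<Longrightarrow> pstart lam (Suc j) = pstart lam j + lam ! j"
  by (simp add: pstart_def take_Suc_conv_app_nth)

lemma pstart_1: "lam \<noteq> [] \<Longrightarrow> pstart lam 1 = lam ! 0"
  using pstart_Suc[of 0 lam] by simp

lemma pstart_mono: "i \<le> j \<Longrightarrow> pstart lam i \<le> pstart lam j"
  unfolding pstart_def by (metis append_take_drop_id le_add1 min.absorb1 sum_list_append take_take)

lemma pstart_le_sum_list: "pstart lam j \<le> sum_list lam"
  unfolding pstart_def by (metis append_take_drop_id le_add1 sum_list_append)

lemma pstart_add_nth_le_sum_list: "j < length lam \<Longrightarrow> pstart lam j + lam ! j \<le> sum_list lam"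
  using pstart_Suc pstart_le_sum_list by metis

lemma blk_eqI:
  assumes "pstart lam j \<le> x" "x < pstart lam (Suc j)"
  shows "blk lam x = Suc j"
proof -
  have "(LEAST j'. x < pstart lam (Suc j')) = j"
  proof (rule Least_equality)
    fix j' assume "x < pstart lam (Suc j')"
    then show "j \<le> j'"
      using assms(1) pstart_mono[of "Suc j'" j lam] by linarith
  qed (rule assms(2))
  then show ?thesis by (simp add: blk_def)
qed

lemma blk_bounds:
  assumes "x < sum_list lam"
  shows "pstart lam (blk lam x - 1) \<le> x" "x < pstart lam (blk lam x)" "1 \<le> blk lam x"
proof -
  define b where "b = (LEAST j. x < pstart lam (Suc j))"
  have "x < pstart lam (Suc (length lam))"
    using assms by (simp add: pstart_def)
  then have upper: "x < pstart lam (Suc b)"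
    unfolding b_def by (rule LeastI)
  have lower: "pstart lam b \<le> x"
  proof (cases b)
    case (Suc b')
    then have "\<not> x < pstart lam (Suc b')"
      unfolding b_def by (metis lessI not_less_Least)
    then show ?thesis using Suc by simp
  qed simp
  have "blk lam x = Suc b" by (simp add: blk_def b_def)
  then show "pstart lam (blk lam x - 1) \<le> x" "x < pstart lam (blk lam x)" "1 \<le> blk lam x"
    using lower upper by simp_all
qed

lemma colblk_coloff_eq:
  assumes "pstart lam j \<le> c" "c < pstart lam (Suc j)"
  shows "colblk lam c = Suc j" "coloff lam c = c - pstart lam j"
proof -
  have "c < sum_list lam"
    using assms(2) pstart_le_sum_list[of lam "Suc j"] by simp
  then show "colblk lam c = Suc j"
    using blk_eqI[OF assms] by (simp add: colblk_def)
  then show "coloff lam c = c - pstart lam j"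
    by (simp add: coloff_def)
qed

lemma rowblk_rowoff_eq:
  assumes "pstart lam j < r" "r \<le> pstart lam (Suc j)"
  shows "rowblk lam r = Suc j" "rowoff lam r = r - 1 - pstart lam j"
proof -
  show "rowblk lam r = Suc j"
    using blk_eqI[of lam j "r - 1"] assms by (simp add: rowblk_def)
  then show "rowoff lam r = r - 1 - pstart lam j"
    by (simp add: rowoff_def)
qed

lemma zeroH_01: "zeroH lam r c \<in> {0, 1}"
  by (simp add: zeroH_def Hmat_def Let_def)

lemma Hmat_first_block:
  assumes "lam \<noteq> []" "r \<le> sum_list lam" "c < lam ! 0"
  shows "Hmat lam r c = (if r = 0 \<or> r = Suc c then 1 else 0)"
proof -
  have p1: "pstart lam 1 = lam ! 0"
    using pstart_1[OF assms(1)] .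
  have col: "colblk lam c = 1" "coloff lam c = c"
    using colblk_coloff_eq[of lam 0 c] assms(3) p1 by simp_all
  consider "r = 0" | "0 < r" "r \<le> lam ! 0" | "lam ! 0 < r"
    by linarith
  then show ?thesis
  proof cases
    case 1
    then show ?thesis using col by (simp add: Hmat_def rowblk_def)
  next
    case 2
    then have "rowblk lam r = 1" "rowoff lam r = r - 1"
      using rowblk_rowoff_eq[of lam 0 r] p1 by simp_all
    then show ?thesis using col 2 by (auto simp: Hmat_def)
  next
    case 3
    have below: "r - 1 < sum_list lam" using 3 assms(2) by linarith
    have "rowblk lam r \<noteq> 1"
      using 3 blk_bounds(2)[OF below] p1 by (auto simp: rowblk_def)
    moreover have "1 \<le> rowblk lam r"
      using 3 blk_bounds(3)[OF below] by (simp add: rowblk_def)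
    ultimately show ?thesis
      using col 3 assms(3) by (auto simp: Hmat_def Let_def)
  qed
qed

lemma Hmat_second_block_first_col:
  assumes "2 \<le> length lam" "\<forall>x\<in>set lam. 0 < x"
  shows "Hmat lam 1 (lam ! 0) = 1" "Hmat lam (Suc (lam ! 0)) (lam ! 0) = 1"
proof -
  have "lam \<noteq> []"
    using assms(1) by auto
  then have p1: "pstart lam 1 = lam ! 0"
    by (rule pstart_1)
  have p2: "pstart lam 2 = lam ! 0 + lam ! 1"
    using pstart_Suc[of 1 lam] assms(1) p1 by (simp add: numeral_2_eq_2)
  have "lam ! 0 \<in> set lam" "lam ! 1 \<in> set lam"
    using assms(1) by (auto intro!: nth_mem)
  then have pos: "0 < lam ! 0" "0 < lam ! 1"
    using assms(2) by simp_all
  have col: "colblk lam (lam ! 0) = 2" "coloff lam (lam ! 0) = 0"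
    using colblk_coloff_eq[of lam 1 "lam ! 0"] p1 p2 pos by (auto simp: numeral_2_eq_2)
  have "rowblk lam 1 = 1"
    using rowblk_rowoff_eq[of lam 0 1] p1 pos by simp
  then show "Hmat lam 1 (lam ! 0) = 1"
    using col by (simp add: Hmat_def)
  have "rowblk lam (Suc (lam ! 0)) = 2" "rowoff lam (Suc (lam ! 0)) = 0"
    using rowblk_rowoff_eq[of lam 1 "Suc (lam ! 0)"] p1 p2 pos by (auto simp: numeral_2_eq_2)
  then show "Hmat lam (Suc (lam ! 0)) (lam ! 0) = 1"
    using col by (simp add: Hmat_def)
qed

lemma Hmat_block_col_differs_iff:
  assumes "j < length lam" "t < lam ! j" "r \<le> sum_list lam"
  defines "s \<equiv> pstart lam j"
  shows "Hmat lam r (s + t) \<noteq> Hmat lam r s \<longleftrightarrow> t \<noteq> 0 \<and> (r = Suc s \<or> r = Suc (s + t))"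
proof -
  have end_j: "pstart lam (Suc j) = s + lam ! j"
    using pstart_Suc[OF assms(1)] by (simp add: s_def)
  have col_t: "colblk lam (s + t) = Suc j" "coloff lam (s + t) = t"
    using colblk_coloff_eq[of lam j "s + t"] assms(2) end_j by (simp_all add: s_def)
  have col_0: "colblk lam s = Suc j" "coloff lam s = 0"
    using colblk_coloff_eq[of lam j s] assms(2) end_j by (simp_all add: s_def)
  show ?thesis
  proof (cases "rowblk lam r = Suc j")
    case False
    moreover have "r \<noteq> Suc s" "r \<noteq> Suc (s + t)"
      using rowblk_rowoff_eq[of lam j "Suc s"] rowblk_rowoff_eq[of lam j "Suc (s + t)"]
        assms(2) end_j False by (auto simp: s_def)
    ultimately show ?thesis
      using col_t col_0 by (auto simp: Hmat_def Let_def)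
  next
    case True
    then have r_pos: "1 \<le> r" by (cases "r = 0") (auto simp: rowblk_def)
    then have "s \<le> r - 1"
      using True blk_bounds(1)[of "r - 1" lam] assms(3) by (simp add: rowblk_def s_def)
    moreover have "rowoff lam r = r - 1 - s"
      using True by (simp add: rowoff_def s_def)
    ultimately show ?thesis
      using col_t col_0 True r_pos by (auto simp: Hmat_def Let_def)
  qed
qed

lemma colnum_indicator:
  assumes "A \<subseteq> {..<n}" "\<And>i. i < n \<Longrightarrow> P i j = (if i \<in> A then 1 else 0)"
  shows "colnum n P j = (\<Sum>i\<in>A. 2 ^ i)"
proof -
  have "colnum n P j = (\<Sum>i<n. if i \<in> A then 2 ^ i else 0)"
    unfolding colnum_def by (rule sum.cong) (simp_all add: assms(2))
  also have "\<dots> = (\<Sum>i\<in>{..<n} \<inter> A. 2 ^ i)"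
    by (simp add: sum.inter_restrict)
  finally show ?thesis
    using assms(1) by (simp add: Int_absorb1)
qed

text \<open>The number of the column with ones exactly in rows \<open>0\<close> and \<open>t\<close>; for \<open>t = 0\<close> the zero
  column is meant.\<close>
definition pair_num :: "nat \<Rightarrow> nat" where
  "pair_num t = (if t = 0 then 0 else 1 + 2 ^ t)"

lemma strict_mono_pair_num: "strict_mono pair_num"
  by (rule strict_monoI) (auto simp: pair_num_def)

lemma colnum_zeroH_first_block:
  assumes "n = Suc (sum_list lam)" "lam \<noteq> []" "i \<le> lam ! 0"
  shows "colnum n (zeroH lam) i = pair_num i"
proof (cases "i = 0")
  case True
  then show ?thesis by (simp add: colnum_def zeroH_def pair_num_def)
next
  case False
  have "lam ! 0 \<le> sum_list lam"
    using assms(2) by (simp add: elem_le_sum_list)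
  then have "colnum n (zeroH lam) i = (\<Sum>r\<in>{0, i}. 2 ^ r)"
    using assms False by (intro colnum_indicator) (auto simp: zeroH_def Hmat_first_block)
  then show ?thesis
    using False by (simp add: pair_num_def)
qed

lemma pair_num_less_colnum_zeroH:
  assumes "n = Suc (sum_list lam)" "2 \<le> length lam" "\<forall>x\<in>set lam. 0 < x"
  shows "pair_num (Suc (lam ! 0)) < colnum n (zeroH lam) (Suc (lam ! 0))"
proof -
  let ?c = "Suc (lam ! 0)"
  have "lam \<noteq> []"
    using assms(2) by auto
  then have "pstart lam 2 = lam ! 0 + lam ! 1"
    using pstart_Suc[of 1 lam] pstart_1[of lam] assms(2) by (simp add: numeral_2_eq_2)
  then have "lam ! 0 + lam ! 1 \<le> sum_list lam"
    using pstart_le_sum_list[of lam 2] by simp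
  moreover have "lam ! 0 \<in> set lam" "lam ! 1 \<in> set lam"
    using assms(2) by (auto intro!: nth_mem)
  then have "0 < lam ! 0" "0 < lam ! 1"
    using assms(3) by simp_all
  ultimately have rows: "{1, ?c} \<subseteq> {..<n}" "1 \<noteq> ?c"
    using assms(1) by auto
  have "(\<Sum>r\<in>{1, ?c}. zeroH lam r ?c * 2 ^ r) \<le> colnum n (zeroH lam) ?c"
    unfolding colnum_def by (rule sum_mono2) (use rows in auto)
  moreover have "zeroH lam 1 ?c = 1" "zeroH lam ?c ?c = 1"
    using Hmat_second_block_first_col[OF assms(2,3)] by (simp_all add: zeroH_def)
  ultimately have "2 + 2 ^ ?c \<le> colnum n (zeroH lam) ?c"
    using rows(2) by simp
  then show ?thesis
    by (simp add: pair_num_def)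
qed

lemma bij_betw_rotate: "bij_betw (\<lambda>i. (i + k) mod n) {..<n} {..<n :: nat}"
proof -
  have inj: "inj_on (\<lambda>i. (i + k) mod n) {..<n}"
  proof (rule inj_onI)
    fix i i' assume "i \<in> {..<n}" "i' \<in> {..<n}" "(i + k) mod n = (i' + k) mod n"
    then show "i = i'"
      by (simp add: cong_add_rcancel_nat cong_less_modulus_unique_nat flip: cong_def)
  qed
  moreover have "(\<lambda>i. (i + k) mod n) ` {..<n} = {..<n}"
    by (rule endo_inj_surj) (use inj in auto)
  ultimately show ?thesis
    by (simp add: bij_betw_def)
qed

lemma comp_perm_xor_column:
  assumes "\<sigma> i < n" "P (\<sigma> i) j \<in> {0, 1}" "P (\<sigma> i) x \<in> {0, 1}"
  shows "comp_perm \<sigma> {r. r < n \<and> P r x = 1} P i j = (if P (\<sigma> i) j = P (\<sigma> i) x then 0 else 1)"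
  using assms by (auto simp: comp_perm_def)

definition xor_rotate :: "nat \<Rightarrow> nat \<Rightarrow> (nat \<Rightarrow> nat \<Rightarrow> nat) \<Rightarrow> nat \<Rightarrow> nat \<Rightarrow> nat" where
  "xor_rotate n x P = comp_perm (\<lambda>i. (i + x) mod n) {r. r < n \<and> P r x = 1} P"

lemma colnum_xor_rotate_zeroH_block:
  assumes "n = Suc (sum_list lam)" "j < length lam" "t < lam ! j"
  defines "x \<equiv> Suc (pstart lam j)"
  shows "colnum n (xor_rotate n x (zeroH lam)) (x + t) = pair_num t"
proof -
  let ?\<sigma> = "\<lambda>i. (i + x) mod n"
  let ?Q = "xor_rotate n x (zeroH lam)"
  have "x + lam ! j \<le> n"
    using pstart_add_nth_le_sum_list[OF assms(2)] assms(1) by (simp add: x_def)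
  then have x_t: "x + t < n"
    using assms(3) by simp
  have entry: "?Q i (x + t) = (if t \<noteq> 0 \<and> (i = 0 \<or> i = t) then 1 else 0)" if "i < n" for i
  proof -
    have inj: "inj_on ?\<sigma> {..<n}"
      by (rule bij_betw_imp_inj_on[OF bij_betw_rotate])
    have rot: "?\<sigma> i = x \<longleftrightarrow> i = 0" "?\<sigma> i = x + t \<longleftrightarrow> i = t"
      using inj_on_eq_iff[OF inj, of i 0] inj_on_eq_iff[OF inj, of i t] that x_t by (simp_all add: add.commute)
    have "?\<sigma> i \<le> sum_list lam"
      using x_t assms(1) by simp
    then have "zeroH lam (?\<sigma> i) (x + t) \<noteq> zeroH lam (?\<sigma> i) x
        \<longleftrightarrow> t \<noteq> 0 \<and> (i = 0 \<or> i = t)"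
      using Hmat_block_col_differs_iff[OF assms(2,3)] rot by (simp add: zeroH_def x_def)
    moreover have "?Q i (x + t) = (if zeroH lam (?\<sigma> i) (x + t) = zeroH lam (?\<sigma> i) x then 0 else 1)"
      unfolding xor_rotate_def using x_t by (intro comp_perm_xor_column zeroH_01) simp
    ultimately show ?thesis
      by auto
  qed
  show ?thesis
  proof (cases "t = 0")
    case True
    have "colnum n ?Q (x + t) = (\<Sum>r\<in>{}. 2 ^ r)"
      using entry True by (intro colnum_indicator) auto
    then show ?thesis using True by (simp add: pair_num_def)
  next
    case False
    then have "colnum n ?Q (x + t) = (\<Sum>r\<in>{0, t}. 2 ^ r)"
      using entry False x_t by (intro colnum_indicator) auto
    then show ?thesis using False by (simp add: pair_num_def)
  qed
qed

lemma pair_num_image_subset_colnum_xor_rotate: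
  assumes "n = Suc (sum_list lam)" "j < length lam"
  defines "x \<equiv> Suc (pstart lam j)"
  shows "pair_num ` {..<lam ! j} \<subseteq> colnum n (xor_rotate n x (zeroH lam)) ` {..<n}"
proof
  fix v assume "v \<in> pair_num ` {..<lam ! j}"
  then obtain t where t: "t < lam ! j" "v = pair_num t" by blast
  have "x + lam ! j \<le> n"
    using pstart_add_nth_le_sum_list[OF assms(2)] assms(1) by (simp add: x_def)
  then show "v \<in> colnum n (xor_rotate n x (zeroH lam)) ` {..<n}"
    using colnum_xor_rotate_zeroH_block[OF assms(1,2) t(1)] t
    by (intro image_eqI[where x = "x + t"]) (simp_all add: x_def)
qed

lemma sorted_nth_le_of_card:
  fixes zs :: "nat list"
  assumes "sorted zs" "i < length zs" "A \<subseteq> set zs" "finite A" "i < card A" "\<forall>a\<in>A. a \<le> v"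
  shows "zs ! i \<le> v"
proof (rule ccontr)
  assume "\<not> zs ! i \<le> v"
  have "A \<subseteq> (\<lambda>k. zs ! k) ` {..<i}"
  proof
    fix a assume "a \<in> A"
    then obtain k where k: "k < length zs" "zs ! k = a"
      using assms(3) by (metis in_set_conv_nth subsetD)
    have "k < i"
    proof (rule ccontr)
      assume "\<not> k < i"
      then have "zs ! i \<le> zs ! k"
        using sorted_nth_mono[OF assms(1), of i k] k by simp
      then show False
        using \<open>a \<in> A\<close> assms(6) k \<open>\<not> zs ! i \<le> v\<close> by auto
    qed
    then show "a \<in> (\<lambda>k. zs ! k) ` {..<i}"
      using k by auto
  qed
  then have "card A \<le> card ((\<lambda>k. zs ! k) ` {..<i})"
    by (simp add: card_mono)
  also have "\<dots> \<le> i"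
    using card_image_le[of "{..<i}" "\<lambda>k. zs ! k"] by simp
  finally show False
    using assms(5) by simp
qed

lemma not_lex_le_if_pointwise_ge:
  fixes p q :: "nat list"
  assumes "length p = length q" "m < length p" "\<forall>i\<le>m. q ! i \<le> p ! i" "q ! m < p ! m"
  shows "\<not> lex_le p q"
proof
  assume "lex_le p q"
  moreover have "p \<noteq> q" using assms(4) by auto
  ultimately have "(p, q) \<in> lexord {(a, b). a < b}"
    by (simp add: lex_le_def)
  then obtain i where i: "i < length p" "take i p = take i q" "p ! i < q ! i"
    using assms(1) unfolding lexord_take_index_conv by auto
  show False
  proof (cases "i \<le> m")
    case True
    then show ?thesis using assms(3) i(3) by force
  next
    case False
    then have "p ! m = q ! m"
      using i(2) by (metis not_le_imp_less nth_take)
    then show ?thesis using assms(4) by simp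
  qed
qed

lemma not_lex_le_nu:
  fixes f :: "nat \<Rightarrow> nat"
  assumes "strict_mono f" "m < k"
    and "sorted_wrt (<) (map (colnum n P) [0..<k])"
    and "\<forall>i<m. colnum n P i = f i" "f m < colnum n P m"
    and "f ` {..m} \<subseteq> colnum n Q ` {..<k}"
  shows "\<not> lex_le (nu n k P) (nu n k Q)"
proof (rule not_lex_le_if_pointwise_ge)
  have P: "nu n k P ! i = colnum n P i" if "i < k" for i
    using assms(3) that by (simp add: nu_def sorted_sort_id strict_sorted_imp_sorted)
  have Q: "nu n k Q ! i \<le> f i" if "i \<le> m" for i
  proof (rule sorted_nth_le_of_card)
    show "f ` {..i} \<subseteq> set (nu n k Q)"
      using assms(6) that by (auto simp: nu_def atLeast0LessThan)
    show "i < card (f ` {..i})"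
      using strict_mono_imp_inj_on[OF assms(1)] by (simp add: card_image)
    show "\<forall>a\<in>f ` {..i}. a \<le> f i"
      using strict_mono_less_eq[OF assms(1)] by auto
  qed (use assms(2) that in \<open>simp_all add: nu_def\<close>)
  show "length (nu n k P) = length (nu n k Q)" "m < length (nu n k P)"
    using assms(2) by (simp_all add: nu_def)
  show "nu n k Q ! m < nu n k P ! m"
    using P[of m] Q[of m] assms(2,5) by simp
  show "\<forall>i\<le>m. nu n k Q ! i \<le> nu n k P ! i"
  proof (intro allI impI)
    fix i assume "i \<le> m"
    then consider "i < m" | "i = m" by linarith
    then show "nu n k Q ! i \<le> nu n k P ! i"
      using P[of i] Q[of i] assms(2,4,5) \<open>i \<le> m\<close> by cases simp_all
  qed
qed

lemma minimal_repD:
  assumes "minimal_rep n m P" "bij_betw \<sigma> {..<n} {..<n}" "S \<subseteq> {..<n}"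
  shows "lex_le (nu n m P) (nu n m (comp_perm \<sigma> S P))"
  using assms by (simp add: minimal_rep_def)

theorem proposition6p4:
  fixes n :: nat and lam :: "nat list"
  assumes "n \<ge> 3"
    and "lam \<noteq> []"
    and "\<forall>x\<in>set lam. x > 0"
    and "sum_list lam = n - 1"
    and "lam ! 0 \<ge> 2"
    and "last lam \<ge> 2"
    and "\<exists>j. 1 \<le> j \<and> j < length lam \<and> lam ! j > lam ! 0 + 1"
  shows "\<not> minimal_rep n (n + 1) (zeroH lam)"
proof
  assume minimal: "minimal_rep n (n + 1) (zeroH lam)"
  obtain j where j: "1 \<le> j" "j < length lam" "lam ! 0 + 1 < lam ! j"
    using assms(7) by blast
  have n: "n = Suc (sum_list lam)"
    using assms(1,4) by simp
  define Q where "Q = xor_rotate n (Suc (pstart lam j)) (zeroH lam)"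
  have "lex_le (nu n (n + 1) (zeroH lam)) (nu n (n + 1) Q)"
    unfolding Q_def xor_rotate_def by (rule minimal_repD[OF minimal bij_betw_rotate]) auto
  moreover have "\<not> lex_le (nu n (n + 1) (zeroH lam)) (nu n (n + 1) Q)"
  proof (rule not_lex_le_nu[OF strict_mono_pair_num])
    show "Suc (lam ! 0) < n + 1"
      using n assms(2) elem_le_sum_list[of 0 lam] by simp
    show "sorted_wrt (<) (map (colnum n (zeroH lam)) [0..<n + 1])"
      using minimal by (simp add: minimal_rep_def)
    show "\<forall>i<Suc (lam ! 0). colnum n (zeroH lam) i = pair_num i"
      using colnum_zeroH_first_block[OF n assms(2)] by simp
    show "pair_num (Suc (lam ! 0)) < colnum n (zeroH lam) (Suc (lam ! 0))"
      using pair_num_less_colnum_zeroH[OF n _ assms(3)] j by simp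
    have "pair_num ` {..Suc (lam ! 0)} \<subseteq> pair_num ` {..<lam ! j}"
      using j(3) by auto
    also have "\<dots> \<subseteq> colnum n Q ` {..<n + 1}"
      using pair_num_image_subset_colnum_xor_rotate[OF n j(2)] by (auto simp: Q_def)
    finally show "pair_num ` {..Suc (lam ! 0)} \<subseteq> colnum n Q ` {..<n + 1}" .
  qed
  ultimately show False
    by contradiction
qed

end
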